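(* Let $\pi$ be a signed permutation with $n$ elements and let $H_\pi$ be its circle graph. Then $d_r(\pi) \geq r(A(H_\pi))$, where $r$ denotes rank over $GF(2)$.
   Context: A signed permutation with $n$ elements is a sequence $\pi=(\pi_1,\dots,\pi_n)$ of nonzero integers with $\{|\pi_1|,\dots,|\pi_n|\}=\{1,\dots,n\}$. A reversal replaces a contiguous block $(\pi_i,\pi_{i+1},\dots,\pi_j)$ by $(-\pi_j,\dots,-\pi_{i+1},-\pi_i)$. The reversal distance $d_r(\pi)$ is the minimum number of reversals transforming $\pi$ into the identity $(1,2,\dots,n)$. Construction of $H_\pi$. Arrange cyclically the segments $I_1,\pi_1,I_2,\pi_2,\dots,I_n,\pi_n,I_{n+1},\$$ (and back to $I_1$); the $I_k$ are intermediate segments and $\$$ is an anchor. Endpoint labels: a segment $i>0$ has left endpoint $v_{i-1}$ and right endpoint $v_i$; a segment $-i$ has left endpoint $v_i$ and right endpoint $v_{i-1}$; $\$$ has left endpoint $v_n$ and right endpoint $v_0$; each $I_k$ has as left endpoint the label of the right endpoint of the preceding segment and as right endpoint the label of the left endpoint of the following segment. $G_\pi$ is the 4-regular multigraph on $\{v_0,\dots,v_n\}$ with one edge per segment joining its endpoint labels. A circuit partition (set of closed walks using every edge exactly once in total) determines at each vertex a route (pairing of the four half-edges). $P_A$ is the single Eulerian circuit following the cyclic order of segments; $P_B$ is the circuit partition whose route at each vertex pairs the two non-intermediate half-edges together and the two intermediate half-edges together. A vertex $v$ is oriented if changing the route of $P_A$ at $v$ to that of $P_B$ at $v$ yields a single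 circuit. $H_\pi$ is the graph (loops allowed) on $\{v_0,\dots,v_n\}$ where distinct $u,w$ are adjacent iff their two occurrences interlace in the cyclic vertex sequence of the Eulerian circuit $P_A$, and $v$ is looped iff $v$ is oriented. $A(H)$ is the adjacency matrix over $GF(2)$, with diagonal entry $1$ exactly at looped vertices. *)

theory Defs
  imports "HOL-Library.Z2" "Jordan_Normal_Form.DL_Rank"
begin

definition signed_perm :: "nat \<Rightarrow> int list \<Rightarrow> bool" where
  "signed_perm n p \<longleftrightarrow> length p = n \<and> 0 \<notin> set p \<and>
     (\<lambda>x. nat \<bar>x\<bar>) ` set p = {1..n}"

text \<open>Reversal of the block of positions i..j (0-based, i \<le> j < length p):
  the block is reversed and every element in it is negated.\<close>
definition reversal :: "nat \<Rightarrow> nat \<Rightarrow> int list \<Rightarrow> int list" where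
  "reversal i j p = take i p @ map uminus (rev (drop i (take (Suc j) p))) @ drop (Suc j) p"

definition is_reversal_step :: "int list \<Rightarrow> int list \<Rightarrow> bool" where
  "is_reversal_step p q \<longleftrightarrow> (\<exists>i j. i \<le> j \<and> j < length p \<and> q = reversal i j p)"

definition identity_sp :: "nat \<Rightarrow> int list" where
  "identity_sp n = map int [1..<Suc n]"

definition reversal_distance :: "int list \<Rightarrow> nat" where
  "reversal_distance p =
     (LEAST k. (is_reversal_step ^^ k) p (identity_sp (length p)))"

text \<open>Cyclic segment sequence I_1, pi_1, I_2, pi_2, ..., I_n, pi_n, I_(n+1), dollar is indexed by
  s < 2n+2: s = 2k is I_(k+1) (intermediate), s = 2k+1 < 2n+1 is pi_(k+1), s = 2n+1 is the anchor.
  Vertex v_i is represented by the number i.\<close>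

definition nseg :: "int list \<Rightarrow> nat" where
  "nseg p = 2 * length p + 2"

text \<open>Endpoints of the non-intermediate segments (b = False: left, b = True: right).\<close>
definition nonint_endpt :: "int list \<Rightarrow> nat \<Rightarrow> bool \<Rightarrow> nat" where
  "nonint_endpt p s b =
     (if s = 2 * length p + 1 then (if b then 0 else length p)
      else (let x = p ! (s div 2) in
            if x > 0 then (if b then nat x else nat x - 1)
            else (if b then nat (- x) - 1 else nat (- x))))"

text \<open>Endpoint label of half-edge (s,b) of any segment; an intermediate segment gets as left
  endpoint the right endpoint of the preceding segment (cyclically) and as right endpoint
  the left endpoint of the following segment.\<close>
definition endpt :: "int list \<Rightarrow> nat \<times> bool \<Rightarrow> nat" where
  "endpt p h = (case h of (s, b) \<Rightarrow>
     if odd s then nonint_endpt p s b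
     else if b then nonint_endpt p (s + 1) False
     else nonint_endpt p ((s + nseg p - 1) mod nseg p) True)"

definition intermediate :: "nat \<times> bool \<Rightarrow> bool" where
  "intermediate h \<longleftrightarrow> even (fst h)"

definition half_edges :: "int list \<Rightarrow> (nat \<times> bool) set" where
  "half_edges p = {(s, b). s < nseg p}"

definition edge_rel :: "int list \<Rightarrow> ((nat \<times> bool) \<times> (nat \<times> bool)) set" where
  "edge_rel p = {((s, b), (s, \<not> b)) | s b. s < nseg p}"

text \<open>A route system (transition system): a symmetric pairing of half-edges at each vertex.
  Route of P_A: following the cyclic order of segments.\<close>
definition route_A :: "int list \<Rightarrow> ((nat \<times> bool) \<times> (nat \<times> bool)) set" where
  "route_A p = {(h, h'). h \<in> half_edges p \<and> h' \<in> half_edges p \<and>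
      ((snd h \<and> \<not> snd h' \<and> fst h' = (fst h + 1) mod nseg p) \<or>
       (snd h' \<and> \<not> snd h \<and> fst h = (fst h' + 1) mod nseg p))}"

text \<open>Route of P_B: at each vertex the two non-intermediate half-edges are paired and the two
  intermediate half-edges are paired.\<close>
definition route_B :: "int list \<Rightarrow> ((nat \<times> bool) \<times> (nat \<times> bool)) set" where
  "route_B p = {(h, h'). h \<in> half_edges p \<and> h' \<in> half_edges p \<and> h \<noteq> h' \<and>
      endpt p h = endpt p h' \<and> (intermediate h \<longleftrightarrow> intermediate h')}"

text \<open>The circuit partition determined by a route system consists of the closed walks obtained by
  alternately traversing an edge and following the route; it is a single circuit iff all
  half-edges are connected by these two kinds of steps.\<close>
definition single_circuit :: "int list \<Rightarrow> ((nat \<times> bool) \<times> (nat \<times> bool)) set \<Rightarrow> bool" where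
  "single_circuit p R \<longleftrightarrow>
     (\<forall>h \<in> half_edges p. \<forall>h' \<in> half_edges p. (h, h') \<in> (edge_rel p \<union> R)\<^sup>*)"

definition switch_route :: "int list \<Rightarrow> nat \<Rightarrow> ((nat \<times> bool) \<times> (nat \<times> bool)) set" where
  "switch_route p v = {(h, h') \<in> route_A p. endpt p h \<noteq> v} \<union> {(h, h') \<in> route_B p. endpt p h = v}"

definition oriented :: "int list \<Rightarrow> nat \<Rightarrow> bool" where
  "oriented p v \<longleftrightarrow> single_circuit p (switch_route p v)"

text \<open>Cyclic vertex sequence of the Eulerian circuit P_A: the vertex passed after each segment.\<close>
definition vertex_seq :: "int list \<Rightarrow> nat list" where
  "vertex_seq p = map (\<lambda>s. endpt p (s, True)) [0..<nseg p]"

definition interlace_word :: "'a list \<Rightarrow> 'a \<Rightarrow> 'a \<Rightarrow> bool" where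
  "interlace_word xs u w \<longleftrightarrow>
     (\<exists>i j k l. i < j \<and> j < k \<and> k < l \<and> l < length xs \<and>
        xs ! i = u \<and> xs ! j = w \<and> xs ! k = u \<and> xs ! l = w)"

text \<open>Distinct u, w are adjacent in H_pi iff their occurrences interlace (cyclically).\<close>
definition H_adj :: "int list \<Rightarrow> nat \<Rightarrow> nat \<Rightarrow> bool" where
  "H_adj p u w \<longleftrightarrow> u \<noteq> w \<and>
     (interlace_word (vertex_seq p) u w \<or> interlace_word (vertex_seq p) w u)"

text \<open>Adjacency matrix of H_pi over GF(2) (vertices v_0..v_n), loops on the diagonal.\<close>
definition adj_matrix :: "int list \<Rightarrow> bit mat" where
  "adj_matrix p = mat (Suc (length p)) (Suc (length p))
     (\<lambda>(u, w). if u = w then (if oriented p u then 1 else 0)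
               else (if H_adj p u w then 1 else 0))"

definition rank_GF2 :: "nat \<Rightarrow> bit mat \<Rightarrow> nat" where
  "rank_GF2 m A = vec_space.rank m A"

end

theory Submission
  imports Defs
begin

text \<open>
  Write the Eulerian circuit P_A as the cyclic word of its 2n+2 passages through vertices:
  every v_k is passed exactly twice, at two positions of the word. A vertex is oriented
  iff its two passages have positions of equal parity, and two vertices are adjacent iff
  their pairs of positions interlace. Reversing the entries at (0-based) list positions
  i..j reflects the stretch of word positions 2i..2j+1, so it toggles the orientation of
  exactly those vertices v with one passage inside the stretch and one outside (call them
  straddled), and it toggles the adjacency of two vertices iff both are straddled. Hence
  A(H_pi) changes by the rank-one matrix x x^T, x the indicator vector of the straddled
  vertices. Since the identity has A(H) = 0 and each reversal changes the rank by at most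
  one, at least rank A(H_pi) reversals are needed.
\<close>

section \<open>Interlacing pairs of positions\<close>

definition between :: "nat \<Rightarrow> nat \<Rightarrow> nat \<Rightarrow> bool" where
  "between x y z \<longleftrightarrow> (x < z \<and> z < y) \<or> (y < z \<and> z < x)"

definition interlaced :: "nat \<Rightarrow> nat \<Rightarrow> nat \<Rightarrow> nat \<Rightarrow> bool" where
  "interlaced a1 a2 b1 b2 \<longleftrightarrow> between a1 a2 b1 \<noteq> between a1 a2 b2"

definition reflect :: "nat \<Rightarrow> nat \<Rightarrow> nat \<Rightarrow> nat" where
  "reflect l r k = (if k \<in> {l..r} then l + r - k else k)"

lemma reflect_reflect: "l \<le> r \<Longrightarrow> reflect l r (reflect l r k) = k"
  unfolding reflect_def by auto

lemma reflect_eq_reflect_iff: "l \<le> r \<Longrightarrow> reflect l r x = reflect l r y \<longleftrightarrow> x = y"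
  by (metis reflect_reflect)

lemma reflect_less_reflect_iff:
  "reflect l r x < reflect l r y \<longleftrightarrow> (if x \<in> {l..r} \<and> y \<in> {l..r} then y < x else x < y)"
  unfolding reflect_def by auto

lemma between_reflect:
  assumes "x \<noteq> y" "x \<noteq> z" "y \<noteq> z"
  shows "between (reflect l r x) (reflect l r y) (reflect l r z) \<longleftrightarrow>
    between x y z \<noteq> ((x \<in> {l..r}) \<noteq> (y \<in> {l..r}) \<and> z \<in> {l..r})"
  unfolding between_def reflect_less_reflect_iff using assms
  by (cases "x \<in> {l..r}"; cases "y \<in> {l..r}"; cases "z \<in> {l..r}"; auto)

lemma interlaced_reflect:
  assumes "a1 \<noteq> a2" "b1 \<noteq> b2" "a1 \<noteq> b1" "a1 \<noteq> b2" "a2 \<noteq> b1" "a2 \<noteq> b2"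
  shows "interlaced (reflect l r a1) (reflect l r a2) (reflect l r b1) (reflect l r b2) \<longleftrightarrow>
    interlaced a1 a2 b1 b2 \<noteq>
      ((a1 \<in> {l..r}) \<noteq> (a2 \<in> {l..r}) \<and> (b1 \<in> {l..r}) \<noteq> (b2 \<in> {l..r}))"
  unfolding interlaced_def
  using between_reflect[of a1 a2 b1 l r] between_reflect[of a1 a2 b2 l r] assms by argo

lemma even_reflect_iff:
  assumes "even l" "odd r"
  shows "even (reflect l r k) \<longleftrightarrow> (even k \<noteq> (k \<in> {l..r}))"
  using assms unfolding reflect_def by (auto; presburger)

lemma between_commute: "between y x z \<longleftrightarrow> between x y z"
  unfolding between_def by auto

lemma interlaced_commute:
  "interlaced a2 a1 b1 b2 \<longleftrightarrow> interlaced a1 a2 b1 b2"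
  "interlaced a1 a2 b2 b1 \<longleftrightarrow> interlaced a1 a2 b1 b2"
  unfolding interlaced_def by (auto simp: between_commute)

lemma interlaced_min_max:
  "interlaced (min a1 a2) (max a1 a2) (min b1 b2) (max b1 b2) \<longleftrightarrow> interlaced a1 a2 b1 b2"
  by (cases "a1 \<le> a2"; cases "b1 \<le> b2") (simp_all add: interlaced_commute)

lemma interlaced_iff:
  assumes "a1 < a2" "b1 < b2" "a1 \<noteq> b1" "a1 \<noteq> b2" "a2 \<noteq> b1" "a2 \<noteq> b2"
  shows "interlaced a1 a2 b1 b2 \<longleftrightarrow> a1 < b1 \<and> b1 < a2 \<and> a2 < b2 \<or> b1 < a1 \<and> a1 < b2 \<and> b2 < a2"
  using assms unfolding interlaced_def between_def by auto

lemma interlace_word_iff: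
  assumes u: "{s. s < length xs \<and> xs ! s = u} = {a1, a2}" and a: "a1 < a2"
    and w: "{s. s < length xs \<and> xs ! s = w} = {b1, b2}" and b: "b1 < b2"
  shows "interlace_word xs u w \<longleftrightarrow> a1 < b1 \<and> b1 < a2 \<and> a2 < b2"
proof
  have pos_u: "s = a1 \<or> s = a2" if "s < length xs" "xs ! s = u" for s
    using that u by blast
  have pos_w: "s = b1 \<or> s = b2" if "s < length xs" "xs ! s = w" for s
    using that w by blast
  assume "interlace_word xs u w"
  then obtain i j k l where "i < j" "j < k" "k < l" "l < length xs"
    "xs ! i = u" "xs ! j = w" "xs ! k = u" "xs ! l = w"
    unfolding interlace_word_def by blast
  with pos_u[of i] pos_u[of k] pos_w[of j] pos_w[of l] a b
  show "a1 < b1 \<and> b1 < a2 \<and> a2 < b2"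
    by auto
next
  have "a1 < length xs \<and> xs ! a1 = u" "a2 < length xs \<and> xs ! a2 = u"
    "b1 < length xs \<and> xs ! b1 = w" "b2 < length xs \<and> xs ! b2 = w"
    using u w by blast+
  then show "a1 < b1 \<and> b1 < a2 \<and> a2 < b2 \<Longrightarrow> interlace_word xs u w"
    unfolding interlace_word_def by blast
qed

lemma interlace_word_either_iff:
  assumes u: "{s. s < length xs \<and> xs ! s = u} = {a1, a2}" "a1 \<noteq> a2"
    and w: "{s. s < length xs \<and> xs ! s = w} = {b1, b2}" "b1 \<noteq> b2"
    and "u \<noteq> w"
  shows "interlace_word xs u w \<or> interlace_word xs w u \<longleftrightarrow> interlaced a1 a2 b1 b2"
proof -
  define A1 A2 B1 B2 where "A1 = min a1 a2" "A2 = max a1 a2" "B1 = min b1 b2" "B2 = max b1 b2"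
  have sets: "{s. s < length xs \<and> xs ! s = u} = {A1, A2}" "{s. s < length xs \<and> xs ! s = w} = {B1, B2}"
    using u w unfolding A1_A2_B1_B2_def by (auto simp: min_def max_def)
  have less: "A1 < A2" "B1 < B2"
    using u w unfolding A1_A2_B1_B2_def by auto
  have "xs ! A1 = u" "xs ! A2 = u" "xs ! B1 = w" "xs ! B2 = w"
    using sets by blast+
  then have "A1 \<noteq> B1" "A1 \<noteq> B2" "A2 \<noteq> B1" "A2 \<noteq> B2"
    using \<open>u \<noteq> w\<close> by metis+
  with less have "interlaced A1 A2 B1 B2 \<longleftrightarrow>
      A1 < B1 \<and> B1 < A2 \<and> A2 < B2 \<or> B1 < A1 \<and> A1 < B2 \<and> B2 < A2"
    by (rule interlaced_iff)
  then show ?thesis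
    using interlace_word_iff[OF sets(1) less(1) sets(2) less(2)]
      interlace_word_iff[OF sets(2) less(2) sets(1) less(1)]
      interlaced_min_max[of a1 a2 b1 b2]
    unfolding A1_A2_B1_B2_def by simp
qed

lemma signed_perm_length: "signed_perm n p \<Longrightarrow> length p = n"
  unfolding signed_perm_def by simp

lemma signed_perm_nth_nonzero: "signed_perm n p \<Longrightarrow> k < length p \<Longrightarrow> p ! k \<noteq> 0"
  unfolding signed_perm_def by (metis nth_mem)

lemma signed_perm_abs_range: "signed_perm n p \<Longrightarrow> k < n \<Longrightarrow> nat \<bar>p ! k\<bar> \<in> {1..n}"
  unfolding signed_perm_def by (metis image_eqI nth_mem)

lemma signed_perm_abs_inj:
  assumes "signed_perm n p" "k < n" "k' < n" "nat \<bar>p ! k\<bar> = nat \<bar>p ! k'\<bar>"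
  shows "k = k'"
proof -
  have "card (set (map (\<lambda>x. nat \<bar>x\<bar>) p)) = length (map (\<lambda>x. nat \<bar>x\<bar>) p)"
    using assms(1) unfolding signed_perm_def by simp
  then have "distinct (map (\<lambda>x. nat \<bar>x\<bar>) p)"
    by (rule card_distinct)
  then show ?thesis
    using assms signed_perm_length[OF assms(1)] unfolding distinct_conv_nth by fastforce
qed

definition index_of :: "int list \<Rightarrow> nat \<Rightarrow> nat" where
  "index_of p a = (THE k. k < length p \<and> nat \<bar>p ! k\<bar> = a)"

lemma index_of_spec:
  assumes "signed_perm n p" "a \<in> {1..n}"
  shows "index_of p a < n" "nat \<bar>p ! index_of p a\<bar> = a"
proof -
  obtain x where "x \<in> set p" "nat \<bar>x\<bar> = a"
    using assms unfolding signed_perm_def by (metis imageE)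
  then obtain k where k: "k < n" "nat \<bar>p ! k\<bar> = a"
    using signed_perm_length[OF assms(1)] by (metis in_set_conv_nth)
  have "index_of p a = k"
    unfolding index_of_def using k signed_perm_abs_inj[OF assms(1)] signed_perm_length[OF assms(1)]
    by (intro the_equality) auto
  with k show "index_of p a < n" "nat \<bar>p ! index_of p a\<bar> = a"
    by auto
qed

lemma index_of_eqI: "signed_perm n p \<Longrightarrow> k < n \<Longrightarrow> index_of p (nat \<bar>p ! k\<bar>) = k"
  using index_of_spec signed_perm_abs_inj signed_perm_abs_range by metis

definition left_label :: "int \<Rightarrow> nat" where
  "left_label x = (if x > 0 then nat x - 1 else nat (- x))"

definition right_label :: "int \<Rightarrow> nat" where
  "right_label x = (if x > 0 then nat x else nat (- x) - 1)"

lemma left_label_uminus: "x \<noteq> 0 \<Longrightarrow> left_label (- x) = right_label x"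
  and right_label_uminus: "x \<noteq> 0 \<Longrightarrow> right_label (- x) = left_label x"
  unfolding left_label_def right_label_def by auto

lemma left_label_eq_iff:
  "x \<noteq> 0 \<Longrightarrow> left_label x = v \<longleftrightarrow> (x > 0 \<and> nat \<bar>x\<bar> = v + 1) \<or> (x < 0 \<and> nat \<bar>x\<bar> = v)"
  unfolding left_label_def by auto

lemma right_label_eq_iff:
  "x \<noteq> 0 \<Longrightarrow> right_label x = v \<longleftrightarrow> (x > 0 \<and> nat \<bar>x\<bar> = v) \<or> (x < 0 \<and> nat \<bar>x\<bar> = v + 1)"
  unfolding right_label_def by auto

lemma length_vertex_seq [simp]: "length (vertex_seq p) = nseg p"
  by (simp add: vertex_seq_def)

lemma vertex_seq_nth_eq_endpt: "s < nseg p \<Longrightarrow> vertex_seq p ! s = endpt p (s, True)"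
  by (simp add: vertex_seq_def)

lemma vertex_seq_nth:
  assumes "s < 2 * length p"
  shows "vertex_seq p ! s = (if even s then left_label else right_label) (p ! (s div 2))"
  using assms
  by (auto simp: vertex_seq_nth_eq_endpt nseg_def endpt_def nonint_endpt_def
      left_label_def right_label_def Let_def elim!: evenE oddE)

lemma vertex_seq_nth_anchor:
  "vertex_seq p ! (2 * length p) = length p"
  "vertex_seq p ! (2 * length p + 1) = 0"
  by (simp_all add: vertex_seq_nth_eq_endpt nseg_def endpt_def nonint_endpt_def)

lemma vertex_seq_nth_eq_iff:
  assumes p: "signed_perm n p" and s: "s < 2 * n"
  shows "vertex_seq p ! s = v \<longleftrightarrow>
    (nat \<bar>p ! (s div 2)\<bar> = v \<and> (p ! (s div 2) > 0 \<longleftrightarrow> odd s)) \<or>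
    (nat \<bar>p ! (s div 2)\<bar> = v + 1 \<and> (p ! (s div 2) > 0 \<longleftrightarrow> even s))"
proof -
  have "s div 2 < length p"
    using s signed_perm_length[OF p] by simp
  then have "p ! (s div 2) \<noteq> 0"
    by (rule signed_perm_nth_nonzero[OF p])
  then show ?thesis
    using s signed_perm_length[OF p]
    by (auto simp: vertex_seq_nth left_label_eq_iff right_label_eq_iff)
qed

lemma endpt_False:
  assumes "s < nseg p"
  shows "endpt p (s, False) = vertex_seq p ! (if s = 0 then nseg p - 1 else s - 1)"
proof -
  have "(s + nseg p - 1) mod nseg p = (if s = 0 then nseg p - 1 else s - 1)"
    using assms by (auto simp: mod_if nseg_def)
  then show ?thesis
    using assms by (auto simp: vertex_seq_nth_eq_endpt endpt_def nseg_def elim!: oddE)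
qed

lemma endpt_Suc_False:
  assumes "s < nseg p"
  shows "endpt p (Suc s mod nseg p, False) = vertex_seq p ! s"
  using assms endpt_False[of "Suc s mod nseg p" p] by (cases "Suc s = nseg p") (auto simp: nseg_def)

definition occ :: "int list \<Rightarrow> nat \<Rightarrow> nat set" where
  "occ p v = {s. s < length (vertex_seq p) \<and> vertex_seq p ! s = v}"

text \<open>
  Vertex v is an endpoint of the segment \<open>\<plusminus>v\<close> and of the segment \<open>\<plusminus>(v+1)\<close>, the anchor
  serving as segment 0 and as segment n+1; the two positions below are the passages through
  v at these two segments.
\<close>

definition upper_occ :: "int list \<Rightarrow> nat \<Rightarrow> nat" where
  "upper_occ p v = (if v = 0 then 2 * length p + 1
     else let k = index_of p v in if p ! k > 0 then 2 * k + 1 else 2 * k)"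

definition lower_occ :: "int list \<Rightarrow> nat \<Rightarrow> nat" where
  "lower_occ p v = (if v = length p then 2 * length p
     else let k = index_of p (v + 1) in if p ! k > 0 then 2 * k else 2 * k + 1)"

lemma upper_occ_in_occ:
  assumes p: "signed_perm n p" and v: "v \<le> n"
  shows "upper_occ p v \<in> occ p v"
proof (cases "v = 0")
  case False
  define k where "k = index_of p v"
  have "k < n" "nat \<bar>p ! k\<bar> = v"
    using index_of_spec[OF p] v False unfolding k_def by auto
  with vertex_seq_nth_eq_iff[OF p, of "upper_occ p v" v] show ?thesis
    using False signed_perm_length[OF p]
    unfolding occ_def upper_occ_def Let_def k_def[symmetric] by (auto simp: nseg_def)
qed (use signed_perm_length[OF p] vertex_seq_nth_anchor in \<open>auto simp: occ_def upper_occ_def nseg_def\<close>)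

lemma lower_occ_in_occ:
  assumes p: "signed_perm n p" and v: "v \<le> n"
  shows "lower_occ p v \<in> occ p v"
proof (cases "v = n")
  case False
  define k where "k = index_of p (v + 1)"
  have "k < n" "nat \<bar>p ! k\<bar> = v + 1"
    using index_of_spec[OF p] v False unfolding k_def by auto
  with vertex_seq_nth_eq_iff[OF p, of "lower_occ p v" v] show ?thesis
    using False signed_perm_length[OF p]
    unfolding occ_def lower_occ_def Let_def k_def[symmetric] by (auto simp: nseg_def)
qed (use signed_perm_length[OF p] vertex_seq_nth_anchor in \<open>auto simp: occ_def lower_occ_def nseg_def\<close>)

lemma occ_subset_upper_lower:
  assumes p: "signed_perm n p" and s: "s \<in> occ p v"
  shows "s = upper_occ p v \<or> s = lower_occ p v"
proof -
  have len: "length p = n"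
    using p by (rule signed_perm_length)
  have s: "s < 2 * n + 2" "vertex_seq p ! s = v"
    using s len unfolding occ_def by (auto simp: nseg_def)
  consider "s = 2 * n" | "s = 2 * n + 1" | "s < 2 * n"
    using s by linarith
  then show ?thesis
  proof cases
    case 3
    define k where "k = s div 2"
    have k: "nat \<bar>p ! k\<bar> \<in> {1..n}" "index_of p (nat \<bar>p ! k\<bar>) = k"
      using 3 signed_perm_abs_range[OF p] index_of_eqI[OF p] unfolding k_def by auto
    have s_eq: "s = (if odd s then 2 * k + 1 else 2 * k)"
      unfolding k_def by simp
    from s(2) have "(nat \<bar>p ! k\<bar> = v \<and> (p ! k > 0 \<longleftrightarrow> odd s)) \<or>
        (nat \<bar>p ! k\<bar> = v + 1 \<and> (p ! k > 0 \<longleftrightarrow> even s))"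
      using vertex_seq_nth_eq_iff[OF p 3] unfolding k_def by simp
    then show ?thesis
    proof (elim disjE conjE)
      assume "nat \<bar>p ! k\<bar> = v" "p ! k > 0 \<longleftrightarrow> odd s"
      with k s_eq show ?thesis
        by (auto simp: upper_occ_def Let_def)
    next
      assume "nat \<bar>p ! k\<bar> = v + 1" "p ! k > 0 \<longleftrightarrow> even s"
      with k s_eq len show ?thesis
        by (auto simp: lower_occ_def Let_def)
    qed
  qed (use s vertex_seq_nth_anchor[of p] len in \<open>auto simp: upper_occ_def lower_occ_def\<close>)
qed

lemma upper_occ_ne_lower_occ:
  assumes p: "signed_perm n p" and v: "v \<le> n"
  shows "upper_occ p v \<noteq> lower_occ p v"
proof -
  have len: "length p = n"
    using p by (rule signed_perm_length)
  have upper: "v \<noteq> 0 \<Longrightarrow> upper_occ p v div 2 = index_of p v \<and> index_of p v < n"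
    using index_of_spec[OF p, of v] v by (auto simp: upper_occ_def Let_def)
  have lower: "v \<noteq> n \<Longrightarrow> lower_occ p v div 2 = index_of p (v + 1) \<and> index_of p (v + 1) < n"
    using index_of_spec[OF p, of "v + 1"] v len by (auto simp: lower_occ_def Let_def)
  have "index_of p v \<noteq> index_of p (v + 1)" if "v \<noteq> 0" "v \<noteq> n"
    using index_of_spec[OF p, of v] index_of_spec[OF p, of "v + 1"] that v by force
  then show ?thesis
    using upper lower len by (cases "v = 0"; cases "v = n") (auto simp: upper_occ_def lower_occ_def)
qed

lemma occ_signed_perm:
  assumes "signed_perm n p" "v \<le> n"
  shows "occ p v = {upper_occ p v, lower_occ p v}"
  using upper_occ_in_occ[OF assms] lower_occ_in_occ[OF assms] occ_subset_upper_lower[OF assms(1)]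
  by blast

section \<open>Oriented vertices\<close>

lemma route_A_cases:
  assumes "(h, h') \<in> route_A p"
  obtains s where "s < nseg p" "h = (s, True)" "h' = (Suc s mod nseg p, False)"
    | s where "s < nseg p" "h' = (s, True)" "h = (Suc s mod nseg p, False)"
  using assms unfolding route_A_def half_edges_def by (cases h; cases h') auto

lemma route_A_endpt: "(h, h') \<in> route_A p \<Longrightarrow> endpt p h = endpt p h'"
  by (elim route_A_cases) (simp_all add: endpt_Suc_False vertex_seq_nth_eq_endpt)

lemma sym_switch_route: "sym (edge_rel p \<union> switch_route p v)"
proof -
  have "(h', h) \<in> switch_route p v" if "(h, h') \<in> switch_route p v" for h h'
    using that route_A_endpt[of h h' p] unfolding switch_route_def
    by (auto simp: route_A_def route_B_def)
  then show ?thesis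
    unfolding sym_def edge_rel_def by auto
qed

lemma edge_rel_step: "s < nseg p \<Longrightarrow> ((s, b), (s, \<not> b)) \<in> edge_rel p \<union> switch_route p v"
  unfolding edge_rel_def by auto

context
  fixes p :: "int list" and v c1 c2 :: nat
  assumes occ_v: "occ p v = {c1, c2}" and c1_less_c2: "c1 < c2"
begin

private lemma c2_less_nseg: "c2 < nseg p"
  using occ_v unfolding occ_def by auto

private lemma vertex_seq_eq_iff: "s < nseg p \<Longrightarrow> vertex_seq p ! s = v \<longleftrightarrow> s = c1 \<or> s = c2"
  using occ_v unfolding occ_def by (auto simp: set_eq_iff)

private lemma route_A_step:
  assumes "s < nseg p" "s \<noteq> c1" "s \<noteq> c2"
  shows "((s, True), (Suc s mod nseg p, False)) \<in> edge_rel p \<union> switch_route p v"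
proof -
  have "((s, True), (Suc s mod nseg p, False)) \<in> route_A p"
    using assms unfolding route_A_def half_edges_def by auto
  moreover have "endpt p (s, True) \<noteq> v"
    using assms vertex_seq_eq_iff by (simp add: vertex_seq_nth_eq_endpt)
  ultimately show ?thesis
    unfolding switch_route_def by auto
qed

private lemma walk_forward:
  assumes "a \<le> b" "b < nseg p" "\<forall>s. a \<le> s \<and> s < b \<longrightarrow> s \<noteq> c1 \<and> s \<noteq> c2"
  shows "((a, x), (b, True)) \<in> (edge_rel p \<union> switch_route p v)\<^sup>*"
  using assms
proof (induction b)
  case 0
  then show ?case
    using edge_rel_step[of 0 p False v] by (cases x) auto
next
  case (Suc b)
  show ?case
  proof (cases "a = Suc b")
    case True
    then show ?thesis
      using edge_rel_step[of a p False v] Suc.prems by (cases x) auto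
  next
    case False
    then have "((a, x), (b, True)) \<in> (edge_rel p \<union> switch_route p v)\<^sup>*"
      using Suc by simp
    moreover have "((b, True), (Suc b, False)) \<in> edge_rel p \<union> switch_route p v"
      using route_A_step[of b] Suc.prems False by simp
    moreover have "((Suc b, False), (Suc b, True)) \<in> edge_rel p \<union> switch_route p v"
      using edge_rel_step[of "Suc b" p False v] Suc.prems by simp
    ultimately show ?thesis
      by (meson rtrancl_into_rtrancl)
  qed
qed

text \<open>
  With equal parities, P_B's route at v joins the two passages through v crosswise, so the
  two arcs of P_A between them are traversed as one circuit.
\<close>

private lemma route_B_passages:
  assumes parity: "even c1 \<longleftrightarrow> even c2"
  shows "((c2, True), (c1, True)) \<in> edge_rel p \<union> switch_route p v"
proof -
  have at_v: "endpt p (c1, True) = v" "endpt p (c2, True) = v"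
    using c1_less_c2 c2_less_nseg vertex_seq_eq_iff by (simp_all flip: vertex_seq_nth_eq_endpt)
  then have "((c2, True), (c1, True)) \<in> route_B p"
    using parity c1_less_c2 c2_less_nseg unfolding route_B_def half_edges_def intermediate_def by auto
  with at_v show ?thesis
    unfolding switch_route_def by auto
qed

private lemma reaches_first_passage:
  assumes parity: "even c1 \<longleftrightarrow> even c2" and h: "h \<in> half_edges p"
  shows "(h, (c1, True)) \<in> (edge_rel p \<union> switch_route p v)\<^sup>*"
proof -
  obtain s x where s: "h = (s, x)" "s < nseg p"
    using h unfolding half_edges_def by (cases h) auto
  consider "s \<le> c1" | "c1 < s" "s \<le> c2" | "c2 < s"
    by linarith
  then show ?thesis
  proof cases
    case 1
    then show ?thesis
      using walk_forward[of s c1 x] s c1_less_c2 c2_less_nseg by auto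
  next
    case 2
    then have "((s, x), (c2, True)) \<in> (edge_rel p \<union> switch_route p v)\<^sup>*"
      using walk_forward[of s c2 x] s c2_less_nseg by auto
    with route_B_passages[OF parity] s show ?thesis
      by (meson rtrancl_into_rtrancl)
  next
    case 3
    have "((s, x), (nseg p - 1, True)) \<in> (edge_rel p \<union> switch_route p v)\<^sup>*"
      using walk_forward[of s "nseg p - 1" x] s 3 c1_less_c2 by auto
    moreover have "((nseg p - 1, True), (0, False)) \<in> edge_rel p \<union> switch_route p v"
      using route_A_step[of "nseg p - 1"] 3 s c1_less_c2 by (simp add: nseg_def)
    moreover have "((0, False), (c1, True)) \<in> (edge_rel p \<union> switch_route p v)\<^sup>*"
      using walk_forward[of 0 c1 False] c1_less_c2 c2_less_nseg by auto
    ultimately show ?thesis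
      using s by (meson rtrancl_into_rtrancl rtrancl_trans)
  qed
qed

lemma oriented_if_same_parity:
  assumes "even c1 \<longleftrightarrow> even c2"
  shows "oriented p v"
proof -
  have "(h, h') \<in> (edge_rel p \<union> switch_route p v)\<^sup>*"
    if "h \<in> half_edges p" "h' \<in> half_edges p" for h h'
    using reaches_first_passage[OF assms that(1)] reaches_first_passage[OF assms that(2)]
      sym_switch_route[of p v]
    by (meson rtrancl_trans sym_conv_converse_eq sym_rtrancl symD)
  then show ?thesis
    unfolding oriented_def single_circuit_def by blast
qed

text \<open>
  With different parities, the half-edges of the segments c1+1..c2 form a union of
  circuits of the switched partition: P_A's routes cannot leave this arc, and P_B's
  route at v pairs half-edges of the same parity, which lie on the same side.
\<close>

private lemma at_v_in_arc_iff:
  assumes parity: "\<not> (even c1 \<longleftrightarrow> even c2)"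
    and h: "h \<in> half_edges p" "endpt p h = v"
  shows "c1 < fst h \<and> fst h \<le> c2 \<longleftrightarrow> (even (fst h) \<longleftrightarrow> odd c1)"
proof -
  obtain t b where t: "h = (t, b)" "t < nseg p"
    using h(1) unfolding half_edges_def by (cases h) auto
  show ?thesis
  proof (cases b)
    case True
    then have "t = c1 \<or> t = c2"
      using h t vertex_seq_eq_iff by (simp flip: vertex_seq_nth_eq_endpt)
    then show ?thesis
      using t parity c1_less_c2 by auto
  next
    case False
    have "(if t = 0 then nseg p - 1 else t - 1) < nseg p"
      using t by (auto simp: nseg_def)
    then have "(if t = 0 then nseg p - 1 else t - 1) \<in> {c1, c2}"
      using h t False vertex_seq_eq_iff endpt_False[of t p] by simp
    then show ?thesis
      using t parity c1_less_c2 c2_less_nseg by (auto split: if_splits simp: nseg_def)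
  qed
qed

private lemma steps_preserve_arc:
  assumes parity: "\<not> (even c1 \<longleftrightarrow> even c2)"
    and step: "(h, h') \<in> edge_rel p \<union> switch_route p v"
  shows "c1 < fst h \<and> fst h \<le> c2 \<longleftrightarrow> c1 < fst h' \<and> fst h' \<le> c2"
proof -
  consider "(h, h') \<in> edge_rel p" | "(h, h') \<in> route_A p" "endpt p h \<noteq> v"
    | "(h, h') \<in> route_B p" "endpt p h = v"
    using step unfolding switch_route_def by auto
  then show ?thesis
  proof cases
    case 1
    then show ?thesis
      unfolding edge_rel_def by auto
  next
    case 2
    have arc_Suc: "c1 < s \<and> s \<le> c2 \<longleftrightarrow> c1 < Suc s mod nseg p \<and> Suc s mod nseg p \<le> c2"
      if "s < nseg p" "vertex_seq p ! s \<noteq> v" for s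
      using that vertex_seq_eq_iff c1_less_c2 c2_less_nseg by (cases "Suc s = nseg p") auto
    have "endpt p h' \<noteq> v"
      using 2 route_A_endpt by metis
    with 2 show ?thesis
      by (elim route_A_cases) (auto simp: arc_Suc simp flip: vertex_seq_nth_eq_endpt)
  next
    case 3
    then show ?thesis
      using at_v_in_arc_iff[OF parity, of h] at_v_in_arc_iff[OF parity, of h']
      unfolding route_B_def intermediate_def by auto
  qed
qed

lemma not_oriented_if_parity_differs:
  assumes parity: "\<not> (even c1 \<longleftrightarrow> even c2)"
  shows "\<not> oriented p v"
proof
  have "c1 < fst h' \<and> fst h' \<le> c2"
    if "(h, h') \<in> (edge_rel p \<union> switch_route p v)\<^sup>*" "c1 < fst h \<and> fst h \<le> c2" for h h'
    using that by (induction rule: rtrancl_induct) (use steps_preserve_arc[OF parity] in blast)+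
  moreover assume "oriented p v"
  then have "((Suc c1, False), (c1, True)) \<in> (edge_rel p \<union> switch_route p v)\<^sup>*"
    using c1_less_c2 c2_less_nseg unfolding oriented_def single_circuit_def half_edges_def by auto
  ultimately show False
    using c1_less_c2 by fastforce
qed

end

lemma oriented_iff_same_parity:
  assumes "occ p v = {c1, c2}" "c1 \<noteq> c2"
  shows "oriented p v \<longleftrightarrow> (even c1 \<longleftrightarrow> even c2)"
proof -
  have "occ p v = {min c1 c2, max c1 c2}" "min c1 c2 < max c1 c2"
    using assms by (auto simp: min_def max_def)
  moreover have "(even (min c1 c2) \<longleftrightarrow> even (max c1 c2)) \<longleftrightarrow> (even c1 \<longleftrightarrow> even c2)"
    by (auto simp: min_def max_def)
  ultimately show ?thesis
    using oriented_if_same_parity not_oriented_if_parity_differs by metis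
qed

lemma H_adj_iff_interlaced:
  assumes "occ p u = {a1, a2}" "a1 \<noteq> a2" "occ p w = {b1, b2}" "b1 \<noteq> b2" "u \<noteq> w"
  shows "H_adj p u w \<longleftrightarrow> interlaced a1 a2 b1 b2"
  using interlace_word_either_iff[of "vertex_seq p" u a1 a2 w b1 b2] assms
  unfolding H_adj_def occ_def by simp

lemma adj_matrix_nth:
  assumes "u \<le> length p" "w \<le> length p"
  shows "adj_matrix p $$ (u, w) = of_bool (if u = w then oriented p u else H_adj p u w)"
  using assms by (simp add: adj_matrix_def)

section \<open>Reversals act on the vertex sequence by reflection\<close>

lemma length_reversal [simp]: "i \<le> j \<Longrightarrow> j < length p \<Longrightarrow> length (reversal i j p) = length p"
  unfolding reversal_def by auto

lemma nth_reversal: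
  assumes "i \<le> j" "j < length p" "m < length p"
  shows "reversal i j p ! m = (if m \<in> {i..j} then - (p ! (i + j - m)) else p ! m)"
  using assms unfolding reversal_def
  by (auto simp: nth_append rev_nth min_def; subgoal_tac "length p = Suc j"; simp)

lemma set_reversal:
  "i \<le> j \<Longrightarrow> set (reversal i j p) =
     set (take i p) \<union> uminus ` set (drop i (take (Suc j) p)) \<union> set (drop (Suc j) p)"
  unfolding reversal_def by auto

lemma signed_perm_reversal:
  assumes p: "signed_perm n p" and ij: "i \<le> j" "j < n"
  shows "signed_perm n (reversal i j p)"
proof -
  have "set p = set (take i p) \<union> set (drop i (take (Suc j) p)) \<union> set (drop (Suc j) p)"
    using ij by (metis append_take_drop_id set_append take_take min_absorb1 le_SucI Un_assoc)
  then show ?thesis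
    using p ij unfolding signed_perm_def set_reversal[OF ij(1)]
    by (auto simp: image_Un image_image)
qed

lemma vertex_seq_reversal:
  assumes p: "signed_perm n p" and ij: "i \<le> j" "j < n" and s: "s < nseg p"
  shows "vertex_seq (reversal i j p) ! s = vertex_seq p ! reflect (2 * i) (2 * j + 1) s"
proof -
  define q where "q = reversal i j p"
  have len: "length p = n" "length q = n"
    using p ij signed_perm_length unfolding q_def by auto
  consider "s \<ge> 2 * n" | "s < 2 * n" "s \<in> {2 * i..2 * j + 1}" | "s < 2 * n" "s \<notin> {2 * i..2 * j + 1}"
    by linarith
  then show ?thesis
  proof cases
    case 1
    then have "s = 2 * n \<or> s = 2 * n + 1" "reflect (2 * i) (2 * j + 1) s = s"
      using s ij len by (auto simp: nseg_def reflect_def)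
    then show ?thesis
      using vertex_seq_nth_anchor[of p] vertex_seq_nth_anchor[of q] len unfolding q_def by auto
  next
    case 2
    define k where "k = s div 2"
    have k: "k \<in> {i..j}" "i + j - k < n" "reflect (2 * i) (2 * j + 1) s = 2 * (i + j - k) + of_bool (even s)"
      using 2 ij unfolding k_def reflect_def by (auto elim!: evenE oddE)
    have "p ! (i + j - k) \<noteq> 0"
      using signed_perm_nth_nonzero[OF p] k len by simp
    moreover have "q ! k = - (p ! (i + j - k))"
      using nth_reversal[of i j p k] k ij len unfolding q_def by simp
    ultimately show ?thesis
      using 2 k len vertex_seq_nth[of s q] vertex_seq_nth[of "2 * (i + j - k) + of_bool (even s)" p]
      unfolding k_def q_def by (auto simp: left_label_uminus right_label_uminus)
  next
    case 3
    then have "s div 2 \<notin> {i..j}" "reflect (2 * i) (2 * j + 1) s = s"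
      unfolding reflect_def by auto
    then show ?thesis
      using 3 ij len vertex_seq_nth[of s q] vertex_seq_nth[of s p] nth_reversal[of i j p "s div 2"]
      unfolding q_def by auto
  qed
qed

lemma occ_reversal:
  assumes p: "signed_perm n p" and ij: "i \<le> j" "j < n"
  shows "occ (reversal i j p) v = reflect (2 * i) (2 * j + 1) ` occ p v"
proof -
  let ?f = "reflect (2 * i) (2 * j + 1)"
  have N: "nseg (reversal i j p) = nseg p" "2 * j + 1 < nseg p"
    using ij signed_perm_length[OF p] by (auto simp: nseg_def)
  have "?f s < nseg p \<longleftrightarrow> s < nseg p" for s
    using N(2) unfolding reflect_def by auto
  then have "s \<in> occ (reversal i j p) v \<longleftrightarrow> ?f s \<in> occ p v" for s
    using N(1) vertex_seq_reversal[OF p ij] unfolding occ_def by auto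
  then show ?thesis
    using reflect_reflect[of "2 * i" "2 * j + 1"] ij by (auto intro: rev_image_eqI)
qed

section \<open>A reversal changes the adjacency matrix by a rank-one matrix\<close>

definition straddles :: "int list \<Rightarrow> nat \<Rightarrow> nat \<Rightarrow> nat \<Rightarrow> bool" where
  "straddles p i j v \<longleftrightarrow> odd (card (occ p v \<inter> {2 * i..2 * j + 1}))"

lemma occ_pair_reversal:
  assumes p: "signed_perm n p" and ij: "i \<le> j" "j < n" and v: "v \<le> n"
  obtains c1 c2 where "c1 \<noteq> c2" "occ p v = {c1, c2}"
    "reflect (2 * i) (2 * j + 1) c1 \<noteq> reflect (2 * i) (2 * j + 1) c2"
    "occ (reversal i j p) v = {reflect (2 * i) (2 * j + 1) c1, reflect (2 * i) (2 * j + 1) c2}"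
    "straddles p i j v \<longleftrightarrow> (c1 \<in> {2 * i..2 * j + 1}) \<noteq> (c2 \<in> {2 * i..2 * j + 1})"
proof -
  let ?c1 = "upper_occ p v" and ?c2 = "lower_occ p v"
  have "?c1 \<noteq> ?c2" "occ p v = {?c1, ?c2}"
    using upper_occ_ne_lower_occ[OF p v] occ_signed_perm[OF p v] .
  moreover from this have "reflect (2 * i) (2 * j + 1) ?c1 \<noteq> reflect (2 * i) (2 * j + 1) ?c2"
    using ij by (simp add: reflect_eq_reflect_iff)
  moreover have "occ (reversal i j p) v = {reflect (2 * i) (2 * j + 1) ?c1, reflect (2 * i) (2 * j + 1) ?c2}"
    using occ_reversal[OF p ij, of v] calculation(2) by simp
  moreover have "straddles p i j v \<longleftrightarrow> (?c1 \<in> {2 * i..2 * j + 1}) \<noteq> (?c2 \<in> {2 * i..2 * j + 1})"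
    unfolding straddles_def calculation(2) using calculation(1)
    by (cases "?c1 \<in> {2 * i..2 * j + 1}"; cases "?c2 \<in> {2 * i..2 * j + 1}") (auto simp: Int_insert_left)
  ultimately show ?thesis
    by (rule that)
qed

lemma oriented_reversal_iff:
  assumes p: "signed_perm n p" and ij: "i \<le> j" "j < n" and v: "v \<le> n"
  shows "oriented (reversal i j p) v \<longleftrightarrow> oriented p v \<noteq> straddles p i j v"
proof -
  let ?f = "reflect (2 * i) (2 * j + 1)"
  obtain c1 c2 where c: "c1 \<noteq> c2" "occ p v = {c1, c2}" "?f c1 \<noteq> ?f c2"
    "occ (reversal i j p) v = {?f c1, ?f c2}"
    "straddles p i j v \<longleftrightarrow> (c1 \<in> {2 * i..2 * j + 1}) \<noteq> (c2 \<in> {2 * i..2 * j + 1})"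
    using occ_pair_reversal[OF p ij v] .
  have "(even (?f c1) \<longleftrightarrow> even (?f c2)) \<longleftrightarrow> (even c1 \<longleftrightarrow> even c2) \<noteq> straddles p i j v"
    using even_reflect_iff[of "2 * i" "2 * j + 1"] c(5) by auto
  then show ?thesis
    using oriented_iff_same_parity[OF c(2,1)] oriented_iff_same_parity[OF c(4,3)] by blast
qed

lemma H_adj_reversal_iff:
  assumes p: "signed_perm n p" and ij: "i \<le> j" "j < n" and uw: "u \<le> n" "w \<le> n" "u \<noteq> w"
  shows "H_adj (reversal i j p) u w \<longleftrightarrow> H_adj p u w \<noteq> (straddles p i j u \<and> straddles p i j w)"
proof -
  let ?f = "reflect (2 * i) (2 * j + 1)"
  obtain c1 c2 where c: "c1 \<noteq> c2" "occ p u = {c1, c2}" "?f c1 \<noteq> ?f c2"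
    "occ (reversal i j p) u = {?f c1, ?f c2}"
    "straddles p i j u \<longleftrightarrow> (c1 \<in> {2 * i..2 * j + 1}) \<noteq> (c2 \<in> {2 * i..2 * j + 1})"
    using occ_pair_reversal[OF p ij uw(1)] .
  obtain d1 d2 where d: "d1 \<noteq> d2" "occ p w = {d1, d2}" "?f d1 \<noteq> ?f d2"
    "occ (reversal i j p) w = {?f d1, ?f d2}"
    "straddles p i j w \<longleftrightarrow> (d1 \<in> {2 * i..2 * j + 1}) \<noteq> (d2 \<in> {2 * i..2 * j + 1})"
    using occ_pair_reversal[OF p ij uw(2)] .
  have "vertex_seq p ! c = u" if "c \<in> {c1, c2}" for c
    using c(2) that unfolding occ_def by blast
  moreover have "vertex_seq p ! d = w" if "d \<in> {d1, d2}" for d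
    using d(2) that unfolding occ_def by blast
  ultimately have "c1 \<noteq> d1" "c1 \<noteq> d2" "c2 \<noteq> d1" "c2 \<noteq> d2"
    using uw(3) by blast+
  then show ?thesis
    using H_adj_iff_interlaced[OF c(2,1) d(2,1) uw(3)] H_adj_iff_interlaced[OF c(4,3) d(4,3) uw(3)]
      interlaced_reflect[of c1 c2 d1 d2 "2 * i" "2 * j + 1"] c d(1,5) by argo
qed

lemma of_bool_add_mult_bit:
  "(of_bool P :: bit) + of_bool X * of_bool Y = of_bool (P \<noteq> (X \<and> Y))"
  by (cases P; cases X; cases Y) simp_all

lemma adj_matrix_reversal:
  assumes p: "signed_perm n p" and ij: "i \<le> j" "j < n"
  shows "adj_matrix p = adj_matrix (reversal i j p) +
    mat (Suc n) (Suc n) (\<lambda>(u, w). of_bool (straddles p i j u) * of_bool (straddles p i j w))"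
    (is "_ = adj_matrix ?q + ?M")
proof (rule eq_matI)
  have len: "length p = n" "length ?q = n"
    using p ij signed_perm_length by auto
  show "dim_row (adj_matrix p) = dim_row (adj_matrix ?q + ?M)"
    "dim_col (adj_matrix p) = dim_col (adj_matrix ?q + ?M)"
    using len by (simp_all add: adj_matrix_def)
  fix u w assume "u < dim_row (adj_matrix ?q + ?M)" "w < dim_col (adj_matrix ?q + ?M)"
  then have uw: "u \<le> n" "w \<le> n"
    by (simp_all add: adj_matrix_def)
  define P Q where "P = (if u = w then oriented p u else H_adj p u w)"
    and "Q = (if u = w then oriented ?q u else H_adj ?q u w)"
  have "P \<longleftrightarrow> Q \<noteq> (straddles p i j u \<and> straddles p i j w)"
    using oriented_reversal_iff[OF p ij uw(1)] H_adj_reversal_iff[OF p ij uw]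
    unfolding P_def Q_def by auto
  then have "adj_matrix p $$ (u, w) = of_bool Q + of_bool (straddles p i j u) * of_bool (straddles p i j w)"
    using uw len unfolding P_def by (simp add: adj_matrix_nth of_bool_add_mult_bit)
  also have "\<dots> = (adj_matrix ?q + ?M) $$ (u, w)"
    using uw len unfolding Q_def by (simp add: adj_matrix_nth adj_matrix_def)
  finally show "adj_matrix p $$ (u, w) = (adj_matrix ?q + ?M) $$ (u, w)" .
qed

lemma rank_adj_matrix_reversal:
  assumes p: "signed_perm n p" and ij: "i \<le> j" "j < n"
  shows "rank_GF2 (Suc n) (adj_matrix p) \<le> rank_GF2 (Suc n) (adj_matrix (reversal i j p)) + 1"
proof -
  let ?M = "mat (Suc n) (Suc n) (\<lambda>(u, w). of_bool (straddles p i j u) * of_bool (straddles p i j w) :: bit)"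
  have "length (reversal i j p) = n"
    using p ij signed_perm_length by auto
  then have "adj_matrix (reversal i j p) \<in> carrier_mat (Suc n) (Suc n)"
    by (simp add: adj_matrix_def)
  moreover have M: "?M \<in> carrier_mat (Suc n) (Suc n)"
    by simp
  ultimately have "rank_GF2 (Suc n) (adj_matrix p) \<le>
      rank_GF2 (Suc n) (adj_matrix (reversal i j p)) + rank_GF2 (Suc n) ?M"
    unfolding rank_GF2_def adj_matrix_reversal[OF p ij] by (rule vec_space.rank_subadditive)
  moreover have "rank_GF2 (Suc n) ?M \<le> 1"
    unfolding rank_GF2_def
    by (rule vec_space.rank_le_1_product_entries[OF M, of "\<lambda>u. of_bool (straddles p i j u)"
          "\<lambda>w. of_bool (straddles p i j w)"]) simp
  ultimately show ?thesis
    by simp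
qed

lemma nth_identity_sp: "k < n \<Longrightarrow> identity_sp n ! k = int (Suc k)"
  unfolding identity_sp_def by (simp del: upt_Suc)

lemma length_identity_sp [simp]: "length (identity_sp n) = n"
  unfolding identity_sp_def by simp

lemma signed_perm_identity_sp: "signed_perm n (identity_sp n)"
proof -
  have "set (identity_sp n) = int ` {1..n}"
    unfolding identity_sp_def by (auto simp: image_iff)
  moreover have "(\<lambda>x. nat \<bar>x\<bar>) ` int ` {1..n} = {1..n}"
    by (force simp: image_iff)
  ultimately show ?thesis
    unfolding signed_perm_def by auto
qed

lemma occ_identity_sp:
  assumes "v \<le> n"
  shows "occ (identity_sp n) v = {if v = 0 then 2 * n + 1 else 2 * v - 1, 2 * v}"
proof -
  let ?p = "identity_sp n"
  have index: "index_of ?p a = a - 1" if "a \<in> {1..n}" for a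
    using index_of_eqI[OF signed_perm_identity_sp[of n], of "a - 1"] that by (auto simp: nth_identity_sp)
  have "upper_occ ?p v = (if v = 0 then 2 * n + 1 else 2 * v - 1)"
    using assms index[of v] nth_identity_sp[of "v - 1" n] by (auto simp: upper_occ_def Let_def)
  moreover have "lower_occ ?p v = 2 * v"
    using assms index[of "v + 1"] nth_identity_sp[of v n] by (auto simp: lower_occ_def Let_def)
  ultimately show ?thesis
    using occ_signed_perm[OF signed_perm_identity_sp assms] by simp
qed

lemma adj_matrix_identity_sp: "adj_matrix (identity_sp n) = 0\<^sub>m (Suc n) (Suc n)"
proof (rule eq_matI)
  fix u w assume "u < dim_row (0\<^sub>m (Suc n) (Suc n) :: bit mat)" "w < dim_col (0\<^sub>m (Suc n) (Suc n) :: bit mat)"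
  then have uw: "u \<le> n" "w \<le> n"
    by auto
  define a where "a v = (if v = 0 then 2 * n + 1 else 2 * v - 1)" for v
  have occ: "occ (identity_sp n) v = {a v, 2 * v}" "a v \<noteq> 2 * v" if "v \<le> n" for v
    using occ_identity_sp[OF that] unfolding a_def by auto
  have "\<not> oriented (identity_sp n) u"
    using oriented_iff_same_parity[OF occ[OF uw(1)]] unfolding a_def by auto
  moreover have "\<not> interlaced (a u) (2 * u) (a w) (2 * w)" if "u \<noteq> w"
  proof (cases "u = 0")
    case True
    then have "w \<noteq> 0"
      using that by simp
    then show ?thesis
      using True uw unfolding a_def interlaced_def between_def by auto
  next
    case False
    then show ?thesis
      unfolding a_def interlaced_def between_def by auto
  qed
  then have "\<not> H_adj (identity_sp n) u w" if "u \<noteq> w"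
    using H_adj_iff_interlaced[OF occ[OF uw(1)] occ[OF uw(2)] that] that by simp
  ultimately show "adj_matrix (identity_sp n) $$ (u, w) = 0\<^sub>m (Suc n) (Suc n) $$ (u, w)"
    using uw by (auto simp: adj_matrix_nth)
qed (simp_all add: adj_matrix_def)

lemma is_reversal_step_reversal: "i \<le> j \<Longrightarrow> j < length p \<Longrightarrow> is_reversal_step p (reversal i j p)"
  unfolding is_reversal_step_def by blast

lemma index_of_next:
  assumes p: "signed_perm n p" and m: "m < n" and prefix: "\<forall>k<m. p ! k = int (Suc k)"
  shows "index_of p (Suc m) \<in> {m..<n}"
proof -
  have t: "index_of p (Suc m) < n" "nat \<bar>p ! index_of p (Suc m)\<bar> = Suc m"
    using index_of_spec[OF p, of "Suc m"] m by auto
  moreover have "\<not> index_of p (Suc m) < m"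
  proof
    assume "index_of p (Suc m) < m"
    with t(2) prefix show False
      by simp
  qed
  ultimately show ?thesis
    by simp
qed

lemma extend_sorted_prefix:
  assumes p: "signed_perm n p" and m: "m < n" and prefix: "\<forall>k<m. p ! k = int (Suc k)"
  obtains q where "is_reversal_step\<^sup>*\<^sup>* p q" "signed_perm n q" "\<forall>k<Suc m. q ! k = int (Suc k)"
proof -
  define t where "t = index_of p (Suc m)"
  define q where "q = reversal m t p"
  have t: "m \<le> t" "t < n" "nat \<bar>p ! t\<bar> = Suc m"
    using index_of_next[OF assms] index_of_spec[OF p, of "Suc m"] m unfolding t_def by auto
  have len: "length p = n"
    using p by (rule signed_perm_length)
  have q: "is_reversal_step p q" "signed_perm n q" "length q = n"
    using is_reversal_step_reversal[of m t p] signed_perm_reversal[OF p t(1,2)] t len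
    unfolding q_def by (auto intro: signed_perm_length)
  have q_prefix: "\<forall>k<m. q ! k = int (Suc k)" "\<bar>q ! m\<bar> = int (Suc m)"
    using nth_reversal[of m t p] t prefix len m unfolding q_def by auto
  show ?thesis
  proof (cases "q ! m > 0")
    case True
    then have "\<forall>k<Suc m. q ! k = int (Suc k)"
      using q_prefix by (auto simp: less_Suc_eq)
    then show ?thesis
      using q(1,2) by (intro that) auto
  next
    case False
    define q' where "q' = reversal m m q"
    have "is_reversal_step q q'" "signed_perm n q'"
      using is_reversal_step_reversal[of m m q] signed_perm_reversal[OF q(2), of m m] m q(3)
      unfolding q'_def by auto
    moreover have "\<forall>k<Suc m. q' ! k = int (Suc k)"
      using nth_reversal[of m m q] q(3) q_prefix False m unfolding q'_def by (auto simp: less_Suc_eq)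
    moreover have "is_reversal_step\<^sup>*\<^sup>* p q'"
      using q(1) calculation(1) by (rule converse_rtranclp_into_rtranclp[OF _ r_into_rtranclp])
    ultimately show ?thesis
      using that by blast
  qed
qed

lemma signed_perm_sortable:
  assumes p: "signed_perm n p"
  shows "is_reversal_step\<^sup>*\<^sup>* p (identity_sp n)"
proof -
  have "\<exists>q. is_reversal_step\<^sup>*\<^sup>* p q \<and> signed_perm n q \<and> (\<forall>k<m. q ! k = int (Suc k))" if "m \<le> n" for m
    using that
  proof (induction m)
    case 0
    then show ?case
      using p by blast
  next
    case (Suc m)
    then obtain q where q: "is_reversal_step\<^sup>*\<^sup>* p q" "signed_perm n q" "\<forall>k<m. q ! k = int (Suc k)"
      by auto
    obtain q' where "is_reversal_step\<^sup>*\<^sup>* q q'" "signed_perm n q'" "\<forall>k<Suc m. q' ! k = int (Suc k)"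
      using extend_sorted_prefix[OF q(2) _ q(3)] Suc.prems by auto
    with q(1) show ?case
      by (meson rtranclp_trans)
  qed
  then obtain q where "is_reversal_step\<^sup>*\<^sup>* p q" "signed_perm n q" "\<forall>k<n. q ! k = int (Suc k)"
    by blast
  moreover from this have "q = identity_sp n"
    by (simp add: list_eq_iff_nth_eq signed_perm_length nth_identity_sp)
  ultimately show ?thesis
    by simp
qed

lemma rank_le_reversal_steps:
  "(is_reversal_step ^^ k) p (identity_sp n) \<Longrightarrow> signed_perm n p \<Longrightarrow>
   rank_GF2 (Suc n) (adj_matrix p) \<le> k"
proof (induction k arbitrary: p)
  case 0
  then show ?case
    by (simp add: adj_matrix_identity_sp rank_GF2_def vec_space.rank_0I)
next
  case (Suc k)
  then obtain i j where ij: "i \<le> j" "j < n"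
    and steps: "(is_reversal_step ^^ k) (reversal i j p) (identity_sp n)"
    using relpowp_Suc_D2[OF Suc.prems(1)] signed_perm_length[OF Suc.prems(2)]
    unfolding is_reversal_step_def by blast
  have "rank_GF2 (Suc n) (adj_matrix (reversal i j p)) \<le> k"
    using Suc.IH[OF steps] signed_perm_reversal[OF Suc.prems(2) ij] .
  then show ?case
    using rank_adj_matrix_reversal[OF Suc.prems(2) ij] by simp
qed

theorem mainTheorem2:
  fixes n :: nat and p :: "int list"
  assumes "signed_perm n p"
  shows "reversal_distance p \<ge> rank_GF2 (Suc n) (adj_matrix p)"
proof -
  have "length p = n"
    using assms by (rule signed_perm_length)
  moreover have "\<exists>k. (is_reversal_step ^^ k) p (identity_sp n)"
    using signed_perm_sortable[OF assms] by (simp add: rtranclp_power)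
  ultimately have "(is_reversal_step ^^ reversal_distance p) p (identity_sp n)"
    unfolding reversal_distance_def by (metis (no_types, lifting) LeastI_ex)
  then show ?thesis
    using rank_le_reversal_steps assms by blast
qed

end
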